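(* In the triangle $ABC$ with $a=1$ and $b=c=\sqrt{2+\sqrt3}$, the triangle centers $X_5$ and $X_{15}$ coincide.
   Context: $X_n$ denotes the $n$-th triangle center listed in Kimberling's Encyclopedia of Triangle Centers (ETC) ($X_5$ the nine-point center, $X_{15}$ the first isodynamic point), with $a=BC$, $b=CA$, $c=AB$. *)

theory Defs
  imports Complex_Main
begin

text \<open>Points of the Euclidean plane are modelled as complex numbers.
  Side lengths: a = |BC|, b = |CA|, c = |AB|.\<close>

text \<open>Interior angle opposite the side of length a (law of cosines).\<close>
definition tri_angle :: "real \<Rightarrow> real \<Rightarrow> real \<Rightarrow> real" where
  "tri_angle a b c = arccos ((b^2 + c^2 - a^2) / (2 * b * c))"

text \<open>The point with (actual, up to scaling) trilinear coordinates x : y : z,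
  i.e. barycentric coordinates a x : b y : c z.\<close>
definition from_trilinear ::
  "complex \<Rightarrow> complex \<Rightarrow> complex \<Rightarrow> real \<Rightarrow> real \<Rightarrow> real \<Rightarrow> real \<Rightarrow> real \<Rightarrow> real \<Rightarrow> complex" where
  "from_trilinear A B C a b c x y z =
     (1 / (a*x + b*y + c*z)) *\<^sub>R ((a*x) *\<^sub>R A + (b*y) *\<^sub>R B + (c*z) *\<^sub>R C)"

text \<open>ETC X(5), nine-point center: trilinears cos(B - C) : cos(C - A) : cos(A - B).\<close>
definition X5 :: "complex \<Rightarrow> complex \<Rightarrow> complex \<Rightarrow> complex" where
  "X5 A B C =
     (let a = dist B C; b = dist C A; c = dist A B;
          \<alpha> = tri_angle a b c; \<beta> = tri_angle b c a; \<gamma> = tri_angle c a b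
      in from_trilinear A B C a b c (cos (\<beta> - \<gamma>)) (cos (\<gamma> - \<alpha>)) (cos (\<alpha> - \<beta>)))"

text \<open>ETC X(15), first isodynamic point: trilinears
  sin(A + pi/3) : sin(B + pi/3) : sin(C + pi/3).\<close>
definition X15 :: "complex \<Rightarrow> complex \<Rightarrow> complex \<Rightarrow> complex" where
  "X15 A B C =
     (let a = dist B C; b = dist C A; c = dist A B;
          \<alpha> = tri_angle a b c; \<beta> = tri_angle b c a; \<gamma> = tri_angle c a b
      in from_trilinear A B C a b c (sin (\<alpha> + pi/3)) (sin (\<beta> + pi/3)) (sin (\<gamma> + pi/3)))"

end

theory Submission
  imports Defs
begin

text \<open>The triangle is isosceles with apex angle \<open>A = \<pi>/6\<close>, since
  \<open>cos A = 1 - a\<^sup>2/(2b\<^sup>2) = 1 - (2 - \<surd>3)/2 = \<surd>3/2\<close>. For such a triangle the trilinears of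
  both centers agree termwise: \<open>cos (B - C) = 1 = sin (A + \<pi>/3)\<close>, and
  \<open>sin (B + \<pi>/3) = cos (B - \<pi>/6) = cos (B - A)\<close>, likewise for \<open>C\<close>.\<close>

lemma tri_angle_commute: "tri_angle a b c = tri_angle a c b"
  unfolding tri_angle_def by (simp add: algebra_simps)

lemma sin_add_pi_div_3: "sin (x + pi/3) = cos (x - pi/6)"
proof -
  have "sin (x + pi/3) = cos (pi/2 - (x + pi/3))"
    by (simp add: cos_sin_eq add.commute)
  also have "pi/2 - (x + pi/3) = -(x - pi/6)"
    by simp
  finally show ?thesis
    by (metis cos_minus)
qed

lemma tri_angle_isosceles_eq_pi_div_6:
  fixes a b :: real
  assumes "b \<noteq> 0" and "a^2 = (2 - sqrt 3) * b^2"
  shows "tri_angle a b b = pi/6"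
proof -
  have "(b^2 + b^2 - a^2) / (2 * b * b) = cos (pi/6)"
    using assms by (simp add: cos_30 field_simps power2_eq_square)
  then show ?thesis
    unfolding tri_angle_def by (simp add: arccos_cos)
qed

lemma X5_eq_X15_if_isosceles_apex_pi_div_6:
  assumes "dist C A = dist A B"
    and "tri_angle (dist B C) (dist C A) (dist A B) = pi/6"
  shows "X5 A B C = X15 A B C"
proof -
  define a b where "a = dist B C" and "b = dist A B"
  define \<alpha> \<beta> where "\<alpha> = tri_angle a b b" and "\<beta> = tri_angle b b a"
  have "\<alpha> = pi/6"
    using assms by (simp add: \<alpha>_def a_def b_def)
  have "sin (\<alpha> + pi/3) = 1"
    using sin_add_pi_div_3[of \<alpha>] by (simp add: \<open>\<alpha> = pi/6\<close>)
  moreover have "sin (\<beta> + pi/3) = cos (\<beta> - \<alpha>)"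
    by (simp add: sin_add_pi_div_3 \<open>\<alpha> = pi/6\<close>)
  moreover have "cos (\<alpha> - \<beta>) = cos (\<beta> - \<alpha>)"
    by (metis cos_minus minus_diff_eq)
  moreover have "tri_angle b a b = \<beta>"
    by (simp add: \<beta>_def tri_angle_commute)
  ultimately show ?thesis
    using assms(1) unfolding X5_def X15_def Let_def
    by (simp flip: a_def b_def \<alpha>_def \<beta>_def)
qed

theorem theorem3p3:
  fixes A B C :: complex
  assumes "dist B C = 1"
    and "dist C A = sqrt (2 + sqrt 3)"
    and "dist A B = sqrt (2 + sqrt 3)"
  shows "X5 A B C = X15 A B C"
proof (rule X5_eq_X15_if_isosceles_apex_pi_div_6)
  show "dist C A = dist A B"
    using assms by simp
  have "tri_angle 1 (sqrt (2 + sqrt 3)) (sqrt (2 + sqrt 3)) = pi/6"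
  proof (rule tri_angle_isosceles_eq_pi_div_6)
    show "sqrt (2 + sqrt 3) \<noteq> 0"
      by (simp add: add_nonneg_eq_0_iff)
    show "1^2 = (2 - sqrt 3) * (sqrt (2 + sqrt 3))^2"
      by (simp add: algebra_simps)
  qed
  then show "tri_angle (dist B C) (dist C A) (dist A B) = pi/6"
    using assms by simp
qed

end
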